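(* Let $M\ge 1$ be an integer, let $\alpha\ge 1$ be real, let $z$ be a real number with $|z|<2$, and let $p_1,\dots,p_M$ and $b_1,\dots,b_M$ be integers such that each $p_m$ is even and each $b_m$ is odd (i.e. $p_m\in 2\mathbb{Z}$ and $b_m-1\in 2\mathbb{Z}$). Define $$y = z + \alpha\sum_{m=1}^{M} p_m b_m .$$ Then $$z=\begin{cases} (y \bmod 4\alpha)-2\alpha, & \text{if } \tfrac12\sum_{m=1}^M p_m \text{ is odd},\\[2pt] \big((y+2\alpha) \bmod 4\alpha\big)-2\alpha, & \text{otherwise}.\end{cases}$$
   Context: For a real number $u$ and $a>0$, $u \bmod a$ denotes the unique element of $[0,a)$ congruent to $u$ modulo $a$, i.e. $u \bmod a = u - a\lfloor u/a\rfloor$. *)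

theory Defs
  imports Complex_Main
begin

definition rmod :: "real \<Rightarrow> real \<Rightarrow> real" (infixl "rmod" 70) where
  "u rmod a = u - a * of_int \<lfloor>u / a\<rfloor>"

end

theory Submission
  imports Defs
begin

text \<open>Since \<open>p b - p = p (b - 1)\<close> is a product of two even numbers, the sum \<open>S = \<Sum> p\<^sub>m b\<^sub>m\<close>
  agrees with \<open>P = \<Sum> p\<^sub>m\<close> modulo 4. Hence \<open>\<alpha> S\<close> is congruent modulo \<open>4 \<alpha>\<close> to \<open>2 \<alpha>\<close> if \<open>P / 2\<close>
  is odd and to \<open>0\<close> otherwise, and since \<open>z + 2 \<alpha>\<close> lies in \<open>[0, 4 \<alpha>)\<close> the reduction
  modulo \<open>4 \<alpha>\<close> returns exactly \<open>z + 2 \<alpha>\<close>.\<close>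

lemma rmod_add_mult:
  fixes a x :: real and k :: int
  assumes "0 \<le> x" "x < a"
  shows "(x + a * of_int k) rmod a = x"
proof -
  have "(x + a * of_int k) / a = x / a + of_int k" using assms by (simp add: field_simps)
  moreover have "\<lfloor>x / a\<rfloor> = 0" using assms by (simp add: floor_eq_iff)
  ultimately have "\<lfloor>(x + a * of_int k) / a\<rfloor> = k" by simp
  thus ?thesis unfolding rmod_def by simp
qed

lemma even_times_odd_sum_dvd:
  fixes p b :: "'a \<Rightarrow> int"
  assumes "\<And>m. m \<in> A \<Longrightarrow> even (p m)" and "\<And>m. m \<in> A \<Longrightarrow> odd (b m)"
  shows "4 dvd (\<Sum>m\<in>A. p m * b m) - (\<Sum>m\<in>A. p m)"
proof -
  have "4 dvd p m * b m - p m" if "m \<in> A" for m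
  proof -
    obtain u where "p m = 2 * u" using assms(1) \<open>m \<in> A\<close> by blast
    moreover obtain v where "b m = 2 * v + 1" using assms(2) \<open>m \<in> A\<close> oddE by blast
    ultimately have "p m * b m - p m = 4 * (u * v)" by (simp add: algebra_simps)
    thus ?thesis by simp
  qed
  hence "4 dvd (\<Sum>m\<in>A. p m * b m - p m)" by (intro dvd_sum) auto
  thus ?thesis by (simp add: sum_subtractf)
qed

theorem mainTheorem1:
  fixes M :: nat and \<alpha> z :: real and p b :: "nat \<Rightarrow> int"
  assumes "M \<ge> 1" and "\<alpha> \<ge> 1" and "\<bar>z\<bar> < 2"
    and "\<And>m. m \<in> {1..M} \<Longrightarrow> even (p m)"
    and "\<And>m. m \<in> {1..M} \<Longrightarrow> odd (b m)"
  shows "let y = z + \<alpha> * of_int (\<Sum>m=1..M. p m * b m) in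
    z = (if odd ((\<Sum>m=1..M. p m) div 2)
         then (y rmod (4 * \<alpha>)) - 2 * \<alpha>
         else ((y + 2 * \<alpha>) rmod (4 * \<alpha>)) - 2 * \<alpha>)"
proof -
  define S where "S = (\<Sum>m=1..M. p m * b m)"
  define P where "P = (\<Sum>m=1..M. p m)"
  have "4 dvd S - P" unfolding S_def P_def by (rule even_times_odd_sum_dvd) (use assms in auto)
  then obtain t where "S - P = 4 * t" by (elim dvdE)
  hence t: "S = P + 4 * t" by simp
  have "even P" unfolding P_def using assms(4) by (intro dvd_sum) auto
  then obtain q where q: "P = 2 * q" by blast
  have z_shifted: "0 \<le> z + 2 * \<alpha>" "z + 2 * \<alpha> < 4 * \<alpha>" using assms(2,3) by auto
  show ?thesis
  proof (cases "odd q")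
    case True
    then obtain r where "q = 2 * r + 1" using oddE by blast
    with t q have "z + \<alpha> * of_int S = (z + 2 * \<alpha>) + 4 * \<alpha> * of_int (t + r)"
      by (simp add: algebra_simps)
    hence "(z + \<alpha> * of_int S) rmod (4 * \<alpha>) = z + 2 * \<alpha>"
      by (simp only: rmod_add_mult[OF z_shifted])
    with True q show ?thesis unfolding Let_def S_def[symmetric] P_def[symmetric] by simp
  next
    case False
    then obtain r where "q = 2 * r" by blast
    with t q have "z + \<alpha> * of_int S + 2 * \<alpha> = (z + 2 * \<alpha>) + 4 * \<alpha> * of_int (t + r)"
      by (simp add: algebra_simps)
    hence "(z + \<alpha> * of_int S + 2 * \<alpha>) rmod (4 * \<alpha>) = z + 2 * \<alpha>"
      by (simp only: rmod_add_mult[OF z_shifted])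
    with False q show ?thesis unfolding Let_def S_def[symmetric] P_def[symmetric] by simp
  qed
qed

end
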